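(* Let $n\ge 2$ and $\gamma_1,\dots,\gamma_n>0$. For $i=1,\dots,n$ let $H_i$ be a system $\dot x_i=f_i(x_i,u_i)$, $y_i=h_i(x_i)$ with $x_i\in\mathbb{R}^{m_i}$, $u_i,y_i\in\mathbb{R}$, and suppose there is a $C^1$ function $V_i:\mathbb{R}^{m_i}\to\mathbb{R}$ with $$\nabla V_i(x_i)\cdot f_i(x_i,u_i)\le -h_i(x_i)^2+\gamma_i\,u_i\,h_i(x_i)\quad\text{for all }x_i\in\mathbb{R}^{m_i},\ u_i\in\mathbb{R}.$$ Consider the closed-loop (cyclic feedback) interconnection $u_1=-y_n$, $u_i=y_{i-1}$ for $i=2,\dots,n$, and write $y=(y_1,\dots,y_n)$. If $\cos(\pi/n)(\gamma_1\cdots\gamma_n)^{1/n}<1$ (i.e. $\gamma_1\cdots\gamma_n<\sec(\pi/n)^n$ when $n\ge3$), then there exist $d_1,\dots,d_n>0$ and $\epsilon>0$ such that $V=\sum_{i=1}^n d_iV_i$ satisfies, along the closed-loop dynamics, $$\dot V=\sum_{i=1}^n d_i\dot V_i\le -\epsilon|y|^2$$ at every state $(x_1,\dots,x_n)$.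
   Context: Here $\dot V_i$ denotes $\nabla V_i(x_i)\cdot f_i(x_i,u_i)$ evaluated with the interconnection inputs. The inequality on $V_i$ is the output feedback passivity (output strict passivity) property with gain $\gamma_i$. *)

theory Defs
  imports "HOL-Analysis.Analysis"
begin

text \<open>The state space R^{m_i} of subsystem i is represented as a linear subspace S
  of an ambient Euclidean space (any finite family of spaces R^{m_i} embeds in a common
  one).\<close>
definition C1_with_gradient_on :: "'a::euclidean_space set \<Rightarrow> ('a \<Rightarrow> real) \<Rightarrow> ('a \<Rightarrow> 'a) \<Rightarrow> bool" where
  "C1_with_gradient_on S V G \<longleftrightarrow>
     (\<forall>x\<in>S. (V has_derivative (\<lambda>v. G x \<bullet> v)) (at x within S)) \<and> continuous_on S G"

definition cyclic_input :: "nat \<Rightarrow> (nat \<Rightarrow> 'a \<Rightarrow> real) \<Rightarrow> (nat \<Rightarrow> 'a) \<Rightarrow> nat \<Rightarrow> real" where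
  "cyclic_input n h x i = (if i = 1 then - h n (x n) else h (i - 1) (x (i - 1)))"

end

theory Submission
  imports Defs
begin

text \<open>Rescale the outputs to z_i = e_i y_i with e_i \<gamma>_i = g e_{i-1} and e_0 = e_n, where g is the
  geometric mean of the gains. With weights d_i = e_i^2 the weighted supply rates then add up to
  -|z|^2 + g (z_1 z_2 + ... + z_{n-1} z_n - z_1 z_n). The bracket is the quadratic form of the
  anti-cyclic shift, which is at most cos(\<pi>/n) |z|^2: the difference is an explicit sum of squares
  whose coefficients come from s_k = sin(k\<pi>/n), telescoping thanks to
  s_{k-1} + s_{k+1} = 2 cos(\<pi>/n) s_k and s_n = 0. So the total is at most
  -(1 - g cos(\<pi>/n)) |z|^2, which is negative definite under the secant condition.\<close>

lemma cot_diff: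
  fixes a b :: real
  assumes "sin a \<noteq> 0" "sin b \<noteq> 0"
  shows "cot a - cot b = sin (b - a) / (sin a * sin b)"
  using assms by (simp add: cot_def sin_diff field_simps)

lemma anticirculant_sos_step:
  fixes a b c d w x y \<sigma> :: real
  assumes "b \<noteq> 0" "d \<noteq> 0" "a + d = 2 * c * b"
  shows "(d * x - b * y + \<sigma> * w)\<^sup>2 / (2 * b * d)
    = c * x\<^sup>2 - a / (2 * b) * x\<^sup>2 + b / (2 * d) * y\<^sup>2 - x * y
      + \<sigma> * w * (x / b - y / d) + \<sigma>\<^sup>2 * w\<^sup>2 / (2 * b * d)"
proof -
  have a: "a = 2 * c * b - d" using assms(3) by simp
  show ?thesis unfolding a using assms(1,2) by (simp add: field_simps power2_eq_square)
qed

lemma anticirculant_sos_partial: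
  fixes z :: "nat \<Rightarrow> real" and \<theta> w :: real
  defines "s \<equiv> \<lambda>k::nat. sin (real k * \<theta>)"
  assumes "\<forall>j\<in>{1..k+1}. s j \<noteq> 0"
  shows "(\<Sum>i=1..k. (s (i+1) * z i - s i * z (i+1) + sin \<theta> * w)\<^sup>2 / (2 * s i * s (i+1)))
    = cos \<theta> * (\<Sum>i=1..k. (z i)\<^sup>2) - (\<Sum>i=1..k. z i * z (i+1)) + s k / (2 * s (k+1)) * (z (k+1))\<^sup>2
      + sin \<theta> * w * (z 1 / sin \<theta> - z (k+1) / s (k+1))
      + sin \<theta> / 2 * w\<^sup>2 * (cot \<theta> - cot (real (k+1) * \<theta>))"
  using assms(2)
proof (induction k)
  case 0
  then show ?case by (simp add: s_def)
next
  case (Suc k)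
  have nz: "s (k+1) \<noteq> 0" "s (k+2) \<noteq> 0" using Suc.prems by auto
  have rec: "s k + s (k+2) = 2 * cos \<theta> * s (k+1)"
    using sin_times_cos[of "real (k+1) * \<theta>" \<theta>] by (simp add: s_def algebra_simps)
  have cot: "sin \<theta> / (s (k+1) * s (k+2)) = cot (real (k+1) * \<theta>) - cot (real (k+2) * \<theta>)"
    using cot_diff[of "real (k+1) * \<theta>" "real (k+2) * \<theta>"] nz by (simp add: s_def algebra_simps)
  have "(s (k+2) * z (k+1) - s (k+1) * z (k+2) + sin \<theta> * w)\<^sup>2 / (2 * s (k+1) * s (k+2))
    = cos \<theta> * (z (k+1))\<^sup>2 - s k / (2 * s (k+1)) * (z (k+1))\<^sup>2 + s (k+1) / (2 * s (k+2)) * (z (k+2))\<^sup>2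
      - z (k+1) * z (k+2) + sin \<theta> * w * (z (k+1) / s (k+1) - z (k+2) / s (k+2))
      + sin \<theta> / 2 * w\<^sup>2 * (cot (real (k+1) * \<theta>) - cot (real (k+2) * \<theta>))"
    unfolding anticirculant_sos_step[OF nz rec] cot[symmetric] by (simp add: power2_eq_square field_simps)
  moreover have "\<forall>j\<in>{1..k+1}. s j \<noteq> 0" using Suc.prems by auto
  ultimately show ?case
    using Suc.IH by (simp add: algebra_simps add_divide_distrib diff_divide_distrib)
qed

lemma sin_multiple_pi_div_pos:
  assumes "0 < j" "j < n"
  shows "sin (real j * (pi / n)) > 0"
  using assms by (auto simp: field_simps intro!: sin_gt_zero)

lemma anticirculant_sos:
  fixes z :: "nat \<Rightarrow> real" and \<theta> :: real
  defines "s \<equiv> \<lambda>k::nat. sin (real k * \<theta>)"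
  assumes \<theta>_last: "real (m + 2) * \<theta> = pi"
  shows "(\<Sum>i=1..m. (s (i+1) * z i - s i * z (i+1) + sin \<theta> * z (m+2))\<^sup>2 / (2 * s i * s (i+1)))
    = cos \<theta> * (\<Sum>i=1..m+2. (z i)\<^sup>2) - ((\<Sum>i=1..<m+2. z i * z (i+1)) - z 1 * z (m+2))"
proof -
  have s_pos: "s j > 0" if "0 < j" "j < m + 2" for j
  proof -
    have "\<theta> = pi / (m + 2)" using \<theta>_last by (simp add: field_simps)
    then show ?thesis using sin_multiple_pi_div_pos[OF that] by (simp add: s_def)
  qed
  have \<theta>_multiples: "real (m+1) * \<theta> = pi - \<theta>" "real (m+2) * \<theta> = pi"
    using \<theta>_last by (simp_all add: algebra_simps)
  have sin_pos: "sin \<theta> > 0" using s_pos[of 1] by (simp add: s_def)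
  have s_last: "s (m+1) = sin \<theta>" "s (m+2) = 0" unfolding s_def \<theta>_multiples by simp_all
  have "s m + s (m+2) = 2 * cos \<theta> * s (m+1)"
    using sin_times_cos[of "real (m+1) * \<theta>" \<theta>] by (simp add: s_def algebra_simps)
  then have s_ratio: "s m / (2 * s (m+1)) = cos \<theta>"
    using s_last sin_pos by (simp add: field_simps)
  have cot_last: "cot (real (m+1) * \<theta>) = - cot \<theta>" unfolding \<theta>_multiples by (simp add: cot_def)
  have s_nz: "\<forall>j\<in>{1..m+1}. s j \<noteq> 0"
  proof
    fix j assume "j \<in> {1..m+1}"
    then show "s j \<noteq> 0" using s_pos[of j] by auto
  qed
  have s_eq: "sin (real k * \<theta>) = s k" for k by (simp add: s_def)
  note partial = anticirculant_sos_partial[of m \<theta> z "z (m+2)", unfolded s_eq, OF s_nz]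
  have "sin \<theta> * z (m+2) * (z 1 / sin \<theta> - z (m+1) / s (m+1)) = z (m+2) * (z 1 - z (m+1))"
    unfolding s_last using sin_pos by (simp add: field_simps)
  moreover have "sin \<theta> / 2 * (z (m+2))\<^sup>2 * (cot \<theta> - cot (real (m+1) * \<theta>)) = cos \<theta> * (z (m+2))\<^sup>2"
    unfolding cot_last using sin_pos by (simp add: cot_def)
  moreover have "(\<Sum>i=1..<m+2. z i * z (i+1)) = (\<Sum>i=1..m. z i * z (i+1)) + z (m+1) * z (m+2)"
    by (simp add: atLeastLessThanSuc_atLeastAtMost)
  moreover have "(\<Sum>i=1..m+2. (z i)\<^sup>2) = (\<Sum>i=1..m. (z i)\<^sup>2) + (z (m+1))\<^sup>2 + (z (m+2))\<^sup>2"
    by simp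
  ultimately show ?thesis
    using partial unfolding s_ratio by (simp add: algebra_simps)
qed

lemma anticirculant_form_le:
  fixes z :: "nat \<Rightarrow> real"
  assumes "n \<ge> 2"
  shows "(\<Sum>i=1..<n. z i * z (i+1)) - z 1 * z n \<le> cos (pi / n) * (\<Sum>i=1..n. (z i)\<^sup>2)"
proof -
  obtain m where n: "n = m + 2" using assms by (metis add.commute le_Suc_ex)
  define s where "s k = sin (real k * (pi / n))" for k
  have s_pos: "s j > 0" if "0 < j" "j < n" for j
    using sin_multiple_pi_div_pos[OF that] by (simp add: s_def)
  have "0 \<le> (\<Sum>i=1..m. (s (i+1) * z i - s i * z (i+1) + s 1 * z n)\<^sup>2 / (2 * s i * s (i+1)))"
    by (intro sum_nonneg divide_nonneg_pos) (auto simp: n intro!: mult_pos_pos s_pos)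
  also have "\<dots> = cos (pi / n) * (\<Sum>i=1..n. (z i)\<^sup>2) - ((\<Sum>i=1..<n. z i * z (i+1)) - z 1 * z n)"
    using anticirculant_sos[of m "pi / n" z] by (simp add: s_def n)
  finally show ?thesis by simp
qed

lemma cyclic_supply_rescaled:
  fixes e y u \<gamma> :: "nat \<Rightarrow> real" and g :: real
  defines "z \<equiv> \<lambda>i. e i * y i"
  assumes "n \<ge> 1"
    and scale: "\<forall>i\<in>{1..n}. e i * \<gamma> i = g * e (i - 1)" and wrap: "e 0 = e n"
    and u_first: "u 1 = - y n" and u_next: "\<forall>i\<in>{2..n}. u i = y (i - 1)"
  shows "(\<Sum>i=1..n. (e i)\<^sup>2 * (- (y i)\<^sup>2 + \<gamma> i * u i * y i))
    = - (\<Sum>i=1..n. (z i)\<^sup>2) + g * ((\<Sum>i=1..<n. z i * z (i+1)) - z 1 * z n)"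
proof -
  have summand: "(e i)\<^sup>2 * (- (y i)\<^sup>2 + \<gamma> i * u i * y i) = - (z i)\<^sup>2 + g * (e (i - 1) * u i * z i)"
    if "i \<in> {1..n}" for i
    using scale that by (simp add: z_def power2_eq_square algebra_simps)
  have "(\<Sum>i=1..n. e (i - 1) * u i * z i) = e 0 * u 1 * z 1 + (\<Sum>i=Suc 1..Suc (n - 1). e (i - 1) * u i * z i)"
    using \<open>n \<ge> 1\<close> by (simp add: sum.atLeast_Suc_atMost)
  also have "(\<Sum>i=Suc 1..Suc (n - 1). e (i - 1) * u i * z i) = (\<Sum>i=1..n - 1. e i * u (i + 1) * z (i + 1))"
    by (simp only: sum.shift_bounds_cl_Suc_ivl) simp
  also have "\<dots> = (\<Sum>i=1..<n. z i * z (i+1))"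
    using u_next by (intro sum.cong) (auto simp: z_def)
  finally have "(\<Sum>i=1..n. e (i - 1) * u i * z i) = (\<Sum>i=1..<n. z i * z (i+1)) - z 1 * z n"
    using wrap u_first by (simp add: z_def)
  moreover have "(\<Sum>i=1..n. (e i)\<^sup>2 * (- (y i)\<^sup>2 + \<gamma> i * u i * y i))
      = (\<Sum>i=1..n. - (z i)\<^sup>2 + g * (e (i - 1) * u i * z i))"
    by (rule sum.cong[OF refl summand])
  ultimately show ?thesis
    by (simp add: sum_subtractf flip: sum_distrib_left)
qed

lemma cyclic_supply_weighted_le:
  fixes e y u \<gamma> :: "nat \<Rightarrow> real" and g :: real
  assumes "n \<ge> 2" "g \<ge> 0"
    and "\<forall>i\<in>{1..n}. e i * \<gamma> i = g * e (i - 1)" "e 0 = e n"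
    and "u 1 = - y n" "\<forall>i\<in>{2..n}. u i = y (i - 1)"
  shows "(\<Sum>i=1..n. (e i)\<^sup>2 * (- (y i)\<^sup>2 + \<gamma> i * u i * y i))
    \<le> - (1 - g * cos (pi / n)) * (\<Sum>i=1..n. (e i * y i)\<^sup>2)"
proof -
  have "(\<Sum>i=1..n. (e i)\<^sup>2 * (- (y i)\<^sup>2 + \<gamma> i * u i * y i))
      = - (\<Sum>i=1..n. (e i * y i)\<^sup>2)
        + g * ((\<Sum>i=1..<n. e i * y i * (e (i+1) * y (i+1))) - e 1 * y 1 * (e n * y n))"
    using assms by (intro cyclic_supply_rescaled) auto
  also have "\<dots> \<le> - (\<Sum>i=1..n. (e i * y i)\<^sup>2) + g * (cos (pi / n) * (\<Sum>i=1..n. (e i * y i)\<^sup>2))"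
    using anticirculant_form_le[OF \<open>n \<ge> 2\<close>, of "\<lambda>i. e i * y i"] \<open>g \<ge> 0\<close>
    by (simp add: mult_left_mono)
  finally show ?thesis by (simp add: algebra_simps)
qed

lemma cyclic_scaling_weights:
  fixes \<gamma> :: "nat \<Rightarrow> real" and g :: real
  assumes \<gamma>_pos: "\<forall>i\<in>{1..n}. \<gamma> i > 0" and "g > 0" and root: "g ^ n = (\<Prod>i=1..n. \<gamma> i)"
  obtains e :: "nat \<Rightarrow> real"
    where "\<forall>i\<in>{1..n}. e i > 0" "\<forall>i\<in>{1..n}. e i * \<gamma> i = g * e (i - 1)" "e 0 = e n"
proof
  define e where "e i = (\<Prod>j=1..i. g / \<gamma> j)" for i
  show "\<forall>i\<in>{1..n}. e i > 0"
    using \<gamma>_pos \<open>g > 0\<close> by (auto simp: e_def intro!: prod_pos)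
  show "\<forall>i\<in>{1..n}. e i * \<gamma> i = g * e (i - 1)"
  proof
    fix i assume i: "i \<in> {1..n}"
    then obtain k where k: "i = Suc k" by (cases i) auto
    have "\<gamma> i > 0" using \<gamma>_pos i by blast
    then show "e i * \<gamma> i = g * e (i - 1)"
      by (simp add: e_def k)
  qed
  have "(\<Prod>i=1..n. \<gamma> i) > 0" using \<gamma>_pos by (intro prod_pos) auto
  have "e n = g ^ n / (\<Prod>i=1..n. \<gamma> i)"
    by (simp add: e_def prod_dividef)
  also have "\<dots> = 1"
    unfolding root by (rule divide_self) (use \<open>(\<Prod>i=1..n. \<gamma> i) > 0\<close> in linarith)
  finally show "e 0 = e n" by (simp add: e_def)
qed

lemma Min_mult_sum_le:
  fixes d a :: "'b \<Rightarrow> real"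
  assumes "finite A" "\<forall>i\<in>A. a i \<ge> 0"
  shows "Min (d ` A) * (\<Sum>i\<in>A. a i) \<le> (\<Sum>i\<in>A. d i * a i)"
  unfolding sum_distrib_left using assms by (intro sum_mono mult_right_mono) auto

theorem corollary1:
  fixes n :: nat
    and \<gamma> :: "nat \<Rightarrow> real"
    and S :: "nat \<Rightarrow> 'a::euclidean_space set"
    and f :: "nat \<Rightarrow> 'a \<Rightarrow> real \<Rightarrow> 'a"
    and h :: "nat \<Rightarrow> 'a \<Rightarrow> real"
    and V :: "nat \<Rightarrow> 'a \<Rightarrow> real"
    and G :: "nat \<Rightarrow> 'a \<Rightarrow> 'a"
  assumes n2: "n \<ge> 2"
    and gpos: "\<forall>i\<in>{1..n}. \<gamma> i > 0"
    and sub: "\<forall>i\<in>{1..n}. subspace (S i)"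
    and fS: "\<forall>i\<in>{1..n}. \<forall>x\<in>S i. \<forall>u. f i x u \<in> S i"
    and C1: "\<forall>i\<in>{1..n}. C1_with_gradient_on (S i) (V i) (G i)"
    and diss: "\<forall>i\<in>{1..n}. \<forall>x\<in>S i. \<forall>u::real.
                 (G i x \<bullet> f i x u) \<le> - ((h i x)^2) + \<gamma> i * u * h i x"
    and sec: "cos (pi / real n) * (\<Prod>i\<in>{1..n}. \<gamma> i) powr (1 / real n) < 1"
  shows "\<exists>d::nat \<Rightarrow> real. \<exists>\<epsilon>::real. (\<forall>i\<in>{1..n}. d i > 0) \<and> \<epsilon> > 0 \<and>
           (\<forall>x::nat \<Rightarrow> 'a. (\<forall>i\<in>{1..n}. x i \<in> S i) \<longrightarrow>
              (\<Sum>i\<in>{1..n}. d i * (G i (x i) \<bullet> f i (x i) (cyclic_input n h x i)))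
                \<le> - \<epsilon> * (\<Sum>i\<in>{1..n}. (h i (x i))^2))"
proof -
  \<comment> \<open>The estimate holds pointwise in the state.\<close>
  define g where "g = root n (\<Prod>i=1..n. \<gamma> i)"
  have prod_pos: "(\<Prod>i=1..n. \<gamma> i) > 0" using gpos by (intro prod_pos) auto
  then have "g > 0" "g ^ n = (\<Prod>i=1..n. \<gamma> i)" using n2 by (simp_all add: g_def)
  then obtain e where e_pos: "\<forall>i\<in>{1..n}. e i > 0"
    and scale: "\<forall>i\<in>{1..n}. e i * \<gamma> i = g * e (i - 1)" and wrap: "e 0 = e n"
    using cyclic_scaling_weights gpos by blast
  define \<rho> where "\<rho> = g * cos (pi / n)"
  have "\<rho> < 1" using sec prod_pos n2 by (simp add: \<rho>_def g_def root_powr_inverse mult.commute)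
  define d where "d i = (e i)\<^sup>2" for i
  define M where "M = Min (d ` {1..n})"
  have d_pos: "\<forall>i\<in>{1..n}. d i > 0" using e_pos by (fastforce simp: d_def)
  then have "M > 0" using n2 by (simp add: M_def)
  show ?thesis
  proof (intro exI conjI allI impI)
    fix x assume xS: "\<forall>i\<in>{1..n}. x i \<in> S i"
    define y where "y i = h i (x i)" for i
    have "(\<Sum>i=1..n. d i * (G i (x i) \<bullet> f i (x i) (cyclic_input n h x i)))
        \<le> (\<Sum>i=1..n. (e i)\<^sup>2 * (- (y i)\<^sup>2 + \<gamma> i * cyclic_input n h x i * y i))"
      using diss xS d_pos by (auto simp: d_def y_def intro!: sum_mono mult_left_mono)
    also have "\<dots> \<le> - (1 - \<rho>) * (\<Sum>i=1..n. d i * (y i)\<^sup>2)"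
      unfolding \<rho>_def d_def power_mult_distrib[symmetric] using n2 \<open>g > 0\<close> scale wrap
      by (intro cyclic_supply_weighted_le) (auto simp: cyclic_input_def y_def)
    also have "\<dots> \<le> - (1 - \<rho>) * (M * (\<Sum>i=1..n. (y i)\<^sup>2))"
      using Min_mult_sum_le[of "{1..n}" "\<lambda>i. (y i)\<^sup>2" d] \<open>\<rho> < 1\<close> by (simp add: M_def)
    finally show "(\<Sum>i\<in>{1..n}. d i * (G i (x i) \<bullet> f i (x i) (cyclic_input n h x i)))
        \<le> - ((1 - \<rho>) * M) * (\<Sum>i\<in>{1..n}. (h i (x i))^2)"
      by (simp add: y_def algebra_simps)
  qed (use d_pos \<open>\<rho> < 1\<close> \<open>M > 0\<close> in auto)
qed

end
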